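(* Let $\Gamma$ be the subgroup of $\Gamma^6$ generated by $A$ and $\mathrm{H}$. Then $\mathrm{H}$ is normal in $\Gamma$, and the quotient group $\Gamma/\mathrm{H}$ is cyclic of order $8$, generated by the coset $\mathrm{H}A$.
   Context: Let $\langle x,y\rangle=x_1y_1+\dots+x_6y_6-x_7y_7$ on $\mathbb{R}^7$, $H^6=\{x:\langle x,x\rangle=-1,x_7>0\}$, and $e_1,\dots,e_7$ the standard basis. $\Gamma^6=PO_{6,1}\mathbb{Z}$ is the group of $7\times7$ integer matrices preserving $\langle\cdot,\cdot\rangle$ and mapping $H^6$ to itself. $\mathrm{K}^6$ is the group of the $64$ matrices $\mathrm{diag}(\varepsilon_1,\dots,\varepsilon_6,1)$, $\varepsilon_i=\pm1$. Define vectors $u_1,\dots,u_{27}$: $u_i=-e_i$ for $1\le i\le 6$; $u_7,\dots,u_{21}$ are $e_a+e_b+e_7$ for the pairs $(a,b)=(1,2),(1,3),(2,3),(1,4),(2,4),(3,4),(1,5),(2,5),(3,5),(4,5),(1,6),(2,6),(3,6),(4,6),(5,6)$ in this order; $u_{22},\dots,u_{27}$ are $\sum_{i=1}^6e_i-e_c+2e_7$ for $c=6,5,4,3,2,1$ in this order. Let $R_j$ be the reflection $x\mapsto x-2\langle x,u_j\rangle u_j$. For $7\le j\le27$ let $k_j\in\mathrm{K}^6$ be the matrix with $\varepsilon_i=-1$ exactly for $i\in N_j$, where $N_7=\{2,3,5\}$, $N_8=\{1,2,3,4,5\}$, $N_9=\{3,4,5\}$, $N_{10}=\{1,2,3,5,6\}$,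 $N_{11}=\{1,4,6\}$, $N_{12}=\{2,3,5\}$, $N_{13}=\{3,4,5\}$, $N_{14}=\{1,2,5\}$, $N_{15}=\{5\}$, $N_{16}=\{2,4,6\}$, $N_{17}=\{1,2,5\}$, $N_{18}=\{2,4,6\}$, $N_{19}=\{6\}$, $N_{20}=\{1,3,4\}$, $N_{21}=\{1,2,3,5,6\}$, $N_{22}=\{1,3,4\}$, $N_{23}=\{2\}$, $N_{24}=\{1,4,6\}$, $N_{25}=\{1,2,3,4,5\}$, $N_{26}=\{4\}$, $N_{27}=\{3\}$. Let $\mathrm{H}$ be the subgroup of $\Gamma^6$ generated by all matrices $\ell R_j\ell k_j$ with $\ell\in\mathrm{K}^6$ and $7\le j\le 27$. Let $A=\begin{pmatrix}1&0&0&0&0&0&0\\0&1&0&0&1&0&-1\\0&0&0&0&0&1&0\\0&-1&0&-1&0&0&1\\0&0&1&0&0&0&0\\0&0&0&-1&-1&0&1\\0&-1&0&-1&-1&0&2\end{pmatrix}.$ *)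

theory Defs
  imports "Jordan_Normal_Form.Matrix" "HOL-Algebra.Coset" "HOL-Algebra.Generated_Groups"
begin

text \<open>Conventions: vectors in R^7 / Z^7 are JNF vectors of dimension 7 and the
 paper's coordinates x_1..x_7 are the (0-based) components x$0..x$6.
 Matrices are 7x7 JNF matrices acting on column vectors by mult_mat_vec.\<close>

definition lf :: "'a::comm_ring_1 vec \<Rightarrow> 'a vec \<Rightarrow> 'a" where
  "lf x y = (\<Sum>i<6. x $ i * y $ i) - x $ 6 * y $ 6"

definition hyp6 :: "real vec set" where
  "hyp6 = {x \<in> carrier_vec 7. lf x x = -1 \<and> x $ 6 > 0}"

definition Gamma6 :: "int mat set" where
  "Gamma6 = {M \<in> carrier_mat 7 7.
      (\<forall>x\<in>carrier_vec 7. \<forall>y\<in>carrier_vec 7.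
          lf (map_mat real_of_int M *\<^sub>v x) (map_mat real_of_int M *\<^sub>v y) = lf x y) \<and>
      (\<forall>x\<in>hyp6. map_mat real_of_int M *\<^sub>v x \<in> hyp6)}"

definition G6 :: "int mat monoid" where
  "G6 = \<lparr>carrier = Gamma6, mult = (*), one = 1\<^sub>m 7\<rparr>"

definition e :: "nat \<Rightarrow> int vec" where
  "e i = unit_vec 7 (i - 1)"

definition pairs :: "(nat \<times> nat) list" where
  "pairs = [(1,2),(1,3),(2,3),(1,4),(2,4),(3,4),(1,5),(2,5),(3,5),(4,5),
            (1,6),(2,6),(3,6),(4,6),(5,6)]"

definition cs :: "nat list" where
  "cs = [6,5,4,3,2,1]"

definition u :: "nat \<Rightarrow> int vec" where
  "u j = (if 1 \<le> j \<and> j \<le> 6 then - e j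
          else if 7 \<le> j \<and> j \<le> 21 then
            e (fst (pairs ! (j - 7))) + e (snd (pairs ! (j - 7))) + e 7
          else (vec 7 (\<lambda>i. if i < 6 then 1 else 0)) - e (cs ! (j - 22)) + 2 \<cdot>\<^sub>v e 7)"

definition refl_vec :: "int vec \<Rightarrow> int vec \<Rightarrow> int vec" where
  "refl_vec v x = x - (2 * lf x v) \<cdot>\<^sub>v v"

definition R :: "nat \<Rightarrow> int mat" where
  "R j = mat 7 7 (\<lambda>(i,k). refl_vec (u j) (e (k + 1)) $ i)"

definition kdiag :: "nat set \<Rightarrow> int mat" where
  "kdiag N = mat 7 7 (\<lambda>(i,k). if i = k then (if i < 6 \<and> i + 1 \<in> N then -1 else 1) else 0)"

definition K6 :: "int mat set" where
  "K6 = kdiag ` Pow {1..6}"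

definition Ns :: "nat set list" where
  "Ns = [{2,3,5},{1,2,3,4,5},{3,4,5},{1,2,3,5,6},{1,4,6},{2,3,5},{3,4,5},{1,2,5},
         {5},{2,4,6},{1,2,5},{2,4,6},{6},{1,3,4},{1,2,3,5,6},{1,3,4},{2},{1,4,6},
         {1,2,3,4,5},{4},{3}]"

definition k :: "nat \<Rightarrow> int mat" where
  "k j = kdiag (Ns ! (j - 7))"

definition Hgrp :: "int mat set" where
  "Hgrp = generate G6 {l * R j * l * k j | l j. l \<in> K6 \<and> 7 \<le> j \<and> j \<le> 27}"

definition A :: "int mat" where
  "A = mat_of_rows_list 7
     [[1,0,0,0,0,0,0],
      [0,1,0,0,1,0,-1],
      [0,0,0,0,0,1,0],
      [0,-1,0,-1,0,0,1],
      [0,0,1,0,0,0,0],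
      [0,0,0,-1,-1,0,1],
      [0,-1,0,-1,-1,0,2]]"

definition GammaA :: "int mat monoid" where
  "GammaA = G6\<lparr>carrier := generate G6 (insert A Hgrp)\<rparr>"

end

(*
  Attach to each letter j of a word in
  the reflections R_1, ..., R_27 the sign pattern N_j (or {j} for j <= 6); a word whose patterns
  cancel in symmetric difference is an element of H, because the generators telescope along it.
  The isometry A permutes the roots u_j up to sign and the sign change R_2, so that
  A R_j A^-1 = R_2 R_sigma(j) R_2; it carries the generators of H to such cancelling words, hence
  normalises H.  The power A^8 is itself a cancelling word, whereas A^4 is not congruent to the
  identity mod 2 although every element of H is.
*)

theory Submission
  imports Defs "Jordan_Normal_Form.Determinant" "HOL-Algebra.Multiplicative_Group"
begin

hide_const (open) Polynomial.order

section \<open>Adjoining an element that normalises a subgroup\<close>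

context group
begin

lemma inv_mult_cancel [simp]: "x \<in> carrier G \<Longrightarrow> y \<in> carrier G \<Longrightarrow> inv x \<otimes> (x \<otimes> y) = y"
  and mult_inv_cancel [simp]: "x \<in> carrier G \<Longrightarrow> y \<in> carrier G \<Longrightarrow> x \<otimes> (inv x \<otimes> y) = y"
  by (simp_all add: m_assoc [symmetric])

lemma conj_generate_closed:
  assumes a: "a \<in> carrier G" and S: "S \<subseteq> carrier G"
    and conj: "\<And>s. s \<in> S \<Longrightarrow> a \<otimes> s \<otimes> inv a \<in> generate G S"
  shows "h \<in> generate G S \<Longrightarrow> a \<otimes> h \<otimes> inv a \<in> generate G S"
proof (induction rule: generate.induct)
  case one
  then show ?case
    using a generate.one by simp
next
  case (incl h)
  then show ?case
    by (rule conj)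
next
  case (inv h)
  then have "a \<otimes> inv h \<otimes> inv a = inv (a \<otimes> h \<otimes> inv a)"
    using a S by (auto simp: inv_mult_group m_assoc)
  then show ?case
    using generate_m_inv_closed [OF S conj [OF inv]] by simp
next
  case (eng h1 h2)
  have "h1 \<in> carrier G" "h2 \<in> carrier G"
    using eng.hyps generate_in_carrier [OF S] by auto
  then have "a \<otimes> (h1 \<otimes> h2) \<otimes> inv a = (a \<otimes> h1 \<otimes> inv a) \<otimes> (a \<otimes> h2 \<otimes> inv a)"
    using a by (simp add: m_assoc)
  then show ?case
    using generate.eng [OF eng.IH] by simp
qed

lemma conj_pow_closed:
  assumes H: "subgroup H G" and a: "a \<in> carrier G"
    and conj: "\<And>h. h \<in> H \<Longrightarrow> a \<otimes> h \<otimes> inv a \<in> H"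
  shows "h \<in> H \<Longrightarrow> a [^] (n::nat) \<otimes> h \<otimes> inv (a [^] n) \<in> H"
proof (induction n arbitrary: h)
  case 0
  then show ?case
    using subgroup.mem_carrier [OF H] by simp
next
  case (Suc n)
  then have "h \<in> carrier G"
    using subgroup.mem_carrier [OF H] by auto
  then have "a [^] Suc n \<otimes> h \<otimes> inv (a [^] Suc n) = a [^] n \<otimes> (a \<otimes> h \<otimes> inv a) \<otimes> inv (a [^] n)"
    using a by (simp add: inv_mult_group m_assoc)
  then show ?case
    using Suc.IH [OF conj [OF Suc.prems]] by simp
qed

text \<open>Conjugation by \<open>inv a\<close> is conjugation by the element \<open>a\<^sup>n \<in> H\<close> followed by conjugation
  by \<open>a\<^sup>n\<^sup>-\<^sup>1\<close>, so it preserves \<open>H\<close> as well.\<close>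

lemma conj_inv_closed:
  assumes H: "subgroup H G" and a: "a \<in> carrier G"
    and conj: "\<And>h. h \<in> H \<Longrightarrow> a \<otimes> h \<otimes> inv a \<in> H"
    and pow: "a [^] n \<in> H" and n: "0 < (n::nat)" and h: "h \<in> H"
  shows "inv a \<otimes> h \<otimes> a \<in> H"
proof -
  define b where "b = a [^] (n - 1)"
  have b: "b \<in> carrier G" and ab: "a \<otimes> b = a [^] n"
    using a n by (simp_all add: b_def nat_pow_Suc2 [symmetric])
  have "inv a = b \<otimes> inv (a [^] n)"
    using a b by (simp add: ab [symmetric] inv_mult_group m_assoc [symmetric])
  then have "inv a \<otimes> h \<otimes> a = b \<otimes> (inv (a [^] n) \<otimes> h \<otimes> a [^] n) \<otimes> inv b"
    using a b h subgroup.mem_carrier [OF H] by (simp add: ab [symmetric] inv_mult_group m_assoc)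
  moreover have "inv (a [^] n) \<otimes> h \<otimes> a [^] n \<in> H"
    using h pow H by (simp add: subgroup.m_closed subgroup.m_inv_closed)
  ultimately show ?thesis
    using conj_pow_closed [OF H a conj] by (simp add: b_def)
qed

lemma normal_generate_insert:
  assumes H: "subgroup H G" and a: "a \<in> carrier G"
    and conj: "\<And>h. h \<in> H \<Longrightarrow> a \<otimes> h \<otimes> inv a \<in> H"
    and pow: "a [^] n \<in> H" and n: "0 < (n::nat)"
  shows "H \<lhd> G\<lparr>carrier := generate G (insert a H)\<rparr>"
proof -
  let ?K = "generate G (insert a H)" and ?S = "insert a H"
  have S: "?S \<subseteq> carrier G"
    using a subgroup.subset [OF H] by auto
  have K: "subgroup ?K G"
    by (rule generate_is_subgroup [OF S])
  have Hc: "h \<in> carrier G" if "h \<in> H" for h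
    using that subgroup.mem_carrier [OF H] by auto
  have conj_inv: "inv a \<otimes> h \<otimes> a \<in> H" if "h \<in> H" for h
    using conj_inv_closed [OF H a conj pow n that] .
  have "x \<otimes> h \<otimes> inv x \<in> H \<and> inv x \<otimes> h \<otimes> x \<in> H" if "x \<in> ?K" "h \<in> H" for x h
    using that
  proof (induction arbitrary: h rule: generate.induct)
    case one
    then show ?case
      using Hc by simp
  next
    case (incl x)
    then show ?case
      using conj conj_inv subgroup.m_closed [OF H] subgroup.m_inv_closed [OF H] Hc by auto
  next
    case (inv x)
    then have "x \<in> carrier G"
      using S by auto
    with inv show ?case
      using conj conj_inv subgroup.m_closed [OF H] subgroup.m_inv_closed [OF H] Hc by auto
  next
    case (eng x y)
    have x: "x \<in> carrier G" and y: "y \<in> carrier G"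
      using eng.hyps generate_in_carrier [OF S] by auto
    have "x \<otimes> y \<otimes> h \<otimes> inv (x \<otimes> y) = x \<otimes> (y \<otimes> h \<otimes> inv y) \<otimes> inv x"
      and "inv (x \<otimes> y) \<otimes> h \<otimes> (x \<otimes> y) = inv y \<otimes> (inv x \<otimes> h \<otimes> x) \<otimes> y"
      using x y Hc [OF eng.prems] by (simp_all add: inv_mult_group m_assoc)
    then show ?case
      using eng.IH eng.prems by metis
  qed
  moreover have "H \<subseteq> ?K"
    by (auto intro: generate.incl)
  ultimately show ?thesis
    using K subgroup_incl [OF H K] subgroup.subgroup_is_group [OF K is_group]
    by (intro group.normal_invI) (auto simp: m_inv_consistent [OF K])
qed

end

context normal
begin

lemma FactGroup_generate_rcos:
  assumes a: "a \<in> carrier G" and gen: "carrier G = generate G (insert a H)"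
  shows "carrier (G Mod H) = generate (G Mod H) {H #> a}"
proof -
  interpret Q: group "G Mod H"
    by (rule factorgroup_is_group)
  interpret \<pi>: group_hom G "G Mod H" "\<lambda>x. H #> x"
    by (simp add: group_hom_def group_hom_axioms_def is_group Q.is_group r_coset_hom_Mod)
  have S: "insert a H \<subseteq> carrier G"
    using a subset by auto
  have HA: "{H #> a} \<subseteq> carrier (G Mod H)"
    using a by (simp add: carrier_FactGroup)
  have "(\<lambda>x. H #> x) ` H = (\<lambda>x. H) ` H"
    by (rule image_cong) (simp_all add: rcos_const [OF is_group])
  then have "(\<lambda>x. H #> x) ` H = {H}"
    using image_constant [OF subgroup.one_closed [OF subgroup_axioms]] by simp
  then have "(\<lambda>x. H #> x) ` insert a H = {H #> a, \<one>\<^bsub>G Mod H\<^esub>}"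
    by simp
  then have "carrier (G Mod H) = generate (G Mod H) {H #> a, \<one>\<^bsub>G Mod H\<^esub>}"
    using \<pi>.generate_img [OF S] gen by (simp add: carrier_FactGroup)
  also have "\<dots> = generate (G Mod H) {H #> a}"
  proof
    show "generate (G Mod H) {H #> a, \<one>\<^bsub>G Mod H\<^esub>} \<subseteq> generate (G Mod H) {H #> a}"
      using Q.generate_is_subgroup [OF HA] generate.one [of "G Mod H"] generate.incl [of "H #> a"]
      by (intro Q.generate_subgroup_incl) auto
    show "generate (G Mod H) {H #> a} \<subseteq> generate (G Mod H) {H #> a, \<one>\<^bsub>G Mod H\<^esub>}"
      by (intro Q.mono_generate) auto
  qed
  finally show ?thesis .
qed

lemma ord_rcos_dvd_iff:
  assumes a: "a \<in> carrier G"
  shows "group.ord (G Mod H) (H #> a) dvd n \<longleftrightarrow> a [^] (n::nat) \<in> H"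
proof -
  interpret Q: group "G Mod H"
    by (rule factorgroup_is_group)
  have "Q.ord (H #> a) dvd n \<longleftrightarrow> (H #> a) [^]\<^bsub>G Mod H\<^esub> n = \<one>\<^bsub>G Mod H\<^esub>"
    using Q.pow_eq_id [of "H #> a" n] a by (simp add: carrier_FactGroup)
  also have "\<dots> \<longleftrightarrow> H #> a [^] n = H"
    using a by (simp add: FactGroup_pow)
  also have "\<dots> \<longleftrightarrow> a [^] n \<in> H"
    using a coset_join1 [OF _ _ subgroup_axioms] rcos_const [OF is_group] by auto
  finally show ?thesis .
qed

end

lemma (in group) quotient_generate_insert:
  assumes H: "subgroup H G" and a: "a \<in> carrier G"
    and conj: "\<And>h. h \<in> H \<Longrightarrow> a \<otimes> h \<otimes> inv a \<in> H"
    and pow: "a [^] n \<in> H" and n: "0 < (n::nat)"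
  defines "\<Gamma> \<equiv> G\<lparr>carrier := generate G (insert a H)\<rparr>"
  shows "H \<lhd> \<Gamma>"
    and "carrier (\<Gamma> Mod H) = generate (\<Gamma> Mod H) {H #>\<^bsub>\<Gamma>\<^esub> a}"
    and "order (\<Gamma> Mod H) = group.ord (\<Gamma> Mod H) (H #>\<^bsub>\<Gamma>\<^esub> a)"
    and "group.ord (\<Gamma> Mod H) (H #>\<^bsub>\<Gamma>\<^esub> a) dvd m \<longleftrightarrow> a [^] (m::nat) \<in> H"
proof -
  show N: "H \<lhd> \<Gamma>"
    unfolding \<Gamma>_def by (rule normal_generate_insert [OF H a conj pow n])
  interpret N: normal H \<Gamma>
    by (rule N)
  interpret Q: group "\<Gamma> Mod H"
    by (rule N.factorgroup_is_group)
  have S: "insert a H \<subseteq> carrier G"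
    using a subgroup.subset [OF H] by auto
  have a': "a \<in> carrier \<Gamma>"
    by (simp add: \<Gamma>_def generate.incl)
  have "carrier \<Gamma> = generate \<Gamma> (insert a H)"
    unfolding \<Gamma>_def using generate_consistent [OF _ generate_is_subgroup [OF S]]
    by (simp add: generate.incl subset_iff)
  then show gen: "carrier (\<Gamma> Mod H) = generate (\<Gamma> Mod H) {H #>\<^bsub>\<Gamma>\<^esub> a}"
    by (rule N.FactGroup_generate_rcos [OF a', rotated])
  have "H #>\<^bsub>\<Gamma>\<^esub> a \<in> carrier (\<Gamma> Mod H)"
    using a' by (simp add: carrier_FactGroup)
  then show "order (\<Gamma> Mod H) = Q.ord (H #>\<^bsub>\<Gamma>\<^esub> a)"
    unfolding Coset.order_def by (simp only: gen Q.generate_pow_card)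
  show "Q.ord (H #>\<^bsub>\<Gamma>\<^esub> a) dvd m \<longleftrightarrow> a [^] m \<in> H"
    using N.ord_rcos_dvd_iff [OF a', of m] by (simp add: \<Gamma>_def flip: nat_pow_consistent)
qed

section \<open>Matrix products on lists of rows\<close>

definition rows_mult :: "'a::semiring_0 list list \<Rightarrow> 'a list list \<Rightarrow> 'a list list" where
  "rows_mult X Y = map (\<lambda>r. map (\<lambda>c. sum_list (map2 (*) r c)) (List.transpose Y)) X"

definition square_rows :: "nat \<Rightarrow> 'a list list \<Rightarrow> bool" where
  "square_rows n X \<longleftrightarrow> length X = n \<and> (\<forall>r\<in>set X. length r = n)"

lemma sum_list_map2_mult:
  "length r = n \<Longrightarrow> length c = n \<Longrightarrow> sum_list (map2 (*) r c) = (\<Sum>i<n. r ! i * c ! i)"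
proof (induction r arbitrary: c n)
  case (Cons a r)
  then obtain b c' where "c = b # c'" "n = Suc (length r)"
    by (cases c) auto
  with Cons show ?case
    by (simp del: sum.lessThan_Suc add: sum.lessThan_Suc_shift)
qed simp

lemma nth_transpose_square_rows:
  assumes "square_rows n X" "i < n"
  shows "length (List.transpose X) = n" and "List.transpose X ! i = map (\<lambda>r. r ! i) X"
proof -
  have "foldr (\<lambda>xs. max (length xs)) Y 0 = n" if "\<forall>r\<in>set Y. length r = n" "Y \<noteq> []" for Y
    using that by (induction Y) (auto, metis foldr.simps(1) id_apply list.set_cases max.idem max_0R)
  then have "foldr (\<lambda>xs. max (length xs)) X 0 = n"
    using assms unfolding square_rows_def by (metis less_zeroE list.size(3))
  then show len: "length (List.transpose X) = n"
    by (simp add: length_transpose)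
  have "filter (\<lambda>ys. i < length ys) X = X"
    using assms by (auto simp: square_rows_def intro!: filter_True)
  then show "List.transpose X ! i = map (\<lambda>r. r ! i) X"
    using assms len by (simp add: nth_transpose)
qed

lemma square_rows_rows_mult:
  assumes "square_rows n X" "square_rows n Y" "0 < n"
  shows "square_rows n (rows_mult X Y)"
  using assms nth_transpose_square_rows (1) [OF assms(2,3)] by (simp add: square_rows_def rows_mult_def)

lemma mat_of_rows_list_mult:
  assumes X: "square_rows n X" and Y: "square_rows n Y"
  shows "mat_of_rows_list n X * mat_of_rows_list n Y = mat_of_rows_list n (rows_mult X Y)"
proof (rule eq_matI)
  fix i j assume "i < dim_row (mat_of_rows_list n (rows_mult X Y))"
    "j < dim_col (mat_of_rows_list n (rows_mult X Y))"
  then have i: "i < n" and j: "j < n"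
    using X by (auto simp: mat_of_rows_list_def rows_mult_def square_rows_def)
  have XY: "length X = n" "length (X ! i) = n" "length Y = n" "\<And>m. m < n \<Longrightarrow> length (Y ! m) = n"
    using X Y i unfolding square_rows_def by auto
  note tY = nth_transpose_square_rows [OF Y j]
  have "(mat_of_rows_list n X * mat_of_rows_list n Y) $$ (i,j) = (\<Sum>m<n. X ! i ! m * Y ! m ! j)"
    using i j XY by (simp add: mat_of_rows_list_def scalar_prod_def atLeast0LessThan)
  also have "\<dots> = sum_list (map2 (*) (X ! i) (List.transpose Y ! j))"
    using XY tY by (subst sum_list_map2_mult [where n = n]) auto
  also have "\<dots> = mat_of_rows_list n (rows_mult X Y) $$ (i,j)"
    using i j XY tY by (simp add: mat_of_rows_list_def rows_mult_def)
  finally show "(mat_of_rows_list n X * mat_of_rows_list n Y) $$ (i,j) = mat_of_rows_list n (rows_mult X Y) $$ (i,j)" .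
qed (use X in \<open>auto simp: mat_of_rows_list_def rows_mult_def square_rows_def\<close>)

lemma square_rows_mat_to_list: "M \<in> carrier_mat n n \<Longrightarrow> square_rows n (mat_to_list M)"
  by (simp add: square_rows_def mat_to_list_def)

lemma mat_of_rows_list_mat_to_list: "M \<in> carrier_mat n n \<Longrightarrow> mat_of_rows_list n (mat_to_list M) = M"
  by (rule eq_matI) (auto simp: mat_of_rows_list_def mat_to_list_def)

text \<open>Products of explicit matrices are evaluated by the simplifier on row lists.\<close>

lemma square_rows_foldr_rows_mult:
  "0 < n \<Longrightarrow> \<forall>M\<in>set Ms. M \<in> carrier_mat n n \<Longrightarrow>
    square_rows n (foldr rows_mult (map mat_to_list Ms) (mat_to_list (1\<^sub>m n)))"
  by (induction Ms) (simp_all add: square_rows_rows_mult square_rows_mat_to_list)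

lemma foldr_mult_eq_rows_mult:
  "0 < n \<Longrightarrow> \<forall>M\<in>set Ms. M \<in> carrier_mat n n \<Longrightarrow>
    foldr (*) Ms (1\<^sub>m n) = mat_of_rows_list n (foldr rows_mult (map mat_to_list Ms) (mat_to_list (1\<^sub>m n)))"
proof (induction Ms)
  case (Cons M Ms)
  then show ?case
    by (simp add: mat_of_rows_list_mult [symmetric] square_rows_mat_to_list
        square_rows_foldr_rows_mult mat_of_rows_list_mat_to_list)
qed (simp add: mat_of_rows_list_mat_to_list)

section \<open>The Lorentz form and \<open>Gamma6\<close>\<close>

lemma lf_explicit: "lf x y = x$0*y$0 + x$1*y$1 + x$2*y$2 + x$3*y$3 + x$4*y$4 + x$5*y$5 - x$6*y$6"
  by (simp add: lf_def lessThan_nat_numeral)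

lemma lf_commute: "lf x y = lf y x"
  by (simp add: lf_def mult.commute)

lemma lf_diff_smult:
  fixes x y v :: "'a :: comm_ring_1 vec"
  assumes "x \<in> carrier_vec 7" "y \<in> carrier_vec 7" "v \<in> carrier_vec 7"
  shows "lf (x - a \<cdot>\<^sub>v v) (y - b \<cdot>\<^sub>v v) = lf x y - b * lf x v - a * lf v y + a * b * lf v v"
  using assms by (simp add: lf_explicit algebra_simps)

lemma lf_uminus_right: "dim_vec v = 7 \<Longrightarrow> lf x (- v) = - lf x v"
  by (simp add: lf_explicit)

lemma lf_unit_vec_left: "p < 7 \<Longrightarrow> lf (unit_vec 7 p) v = (if p < 6 then v $ p else - v $ 6)"
  by (auto simp: lf_def unit_vec_def if_distrib [of "\<lambda>x. x * _"] cong: if_cong)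

lemma lf_eq_sum_unit_vec: "lf x v = (\<Sum>p<7. x $ p * lf (unit_vec 7 p) v)"
proof -
  have "(\<Sum>p<7. x $ p * lf (unit_vec 7 p) v) = (\<Sum>p<7. x $ p * (if p < 6 then v $ p else - v $ 6))"
    by (rule sum.cong) (simp_all add: lf_unit_vec_left)
  then show ?thesis
    by (simp add: lf_def lessThan_Suc [of 6, simplified])
qed

lemma lf_of_int:
  "x \<in> carrier_vec 7 \<Longrightarrow> y \<in> carrier_vec 7 \<Longrightarrow>
    lf (map_vec of_int x) (map_vec of_int y) = (of_int (lf x y) :: 'a :: comm_ring_1)"
  by (simp add: lf_def)

definition J :: "int mat" where
  "J = mat 7 7 (\<lambda>(i,j). if i = j then (if i < 6 then 1 else -1) else 0)"

lemma J_carrier [simp]: "J \<in> carrier_mat 7 7"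
  by (simp add: J_def)

lemma J_dims [simp]: "dim_row J = 7" "dim_col J = 7"
  by (simp_all add: J_def)

lemma J_mult_J: "J * J = 1\<^sub>m 7"
  by (rule eq_matI) (auto simp: J_def scalar_prod_def sum.delta' if_distrib [of "\<lambda>x. x * _"] cong: if_cong)

lemma transpose_J: "transpose_mat J = J"
  by (rule eq_matI) (auto simp: J_def)

lemma J_mult_vec:
  fixes y :: "real vec"
  assumes "y \<in> carrier_vec 7" "i < 7"
  shows "(map_mat real_of_int J *\<^sub>v y) $ i = (if i < 6 then y $ i else - y $ i)"
proof -
  have "(map_mat real_of_int J *\<^sub>v y) $ i
      = (\<Sum>k\<in>{0..<7}. real_of_int (if i = k then (if i < 6 then 1 else -1) else 0) * y $ k)"
    using assms by (simp add: J_def scalar_prod_def row_def)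
  also have "\<dots> = (\<Sum>k\<in>{0..<7}. if k = i then (if i < 6 then 1 else -1) * y $ i else 0)"
    by (rule sum.cong) auto
  finally show ?thesis
    using assms by (simp add: sum.delta)
qed

lemma lf_eq_scalar_prod_J:
  fixes x y :: "real vec"
  assumes "x \<in> carrier_vec 7" "y \<in> carrier_vec 7"
  shows "lf x y = x \<bullet> (map_mat real_of_int J *\<^sub>v y)"
proof -
  have "x \<bullet> (map_mat real_of_int J *\<^sub>v y) = (\<Sum>i<7. x $ i * (if i < 6 then y $ i else - y $ i))"
    using assms by (simp add: scalar_prod_def J_mult_vec atLeast0LessThan del: index_mult_mat_vec)
  also have "\<dots> = lf x y"
    by (simp add: lf_def lessThan_Suc [of 6, simplified])
  finally show ?thesis by simp
qed

lemma lf_mult_mat_vec: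
  fixes x y :: "real vec" and M :: "int mat"
  assumes M: "M \<in> carrier_mat 7 7" and x: "x \<in> carrier_vec 7" and y: "y \<in> carrier_vec 7"
  shows "lf (map_mat real_of_int M *\<^sub>v x) (map_mat real_of_int M *\<^sub>v y)
       = x \<bullet> (map_mat real_of_int (transpose_mat M * J * M) *\<^sub>v y)"
proof -
  let ?M = "map_mat real_of_int M" and ?J = "map_mat real_of_int J"
  have Mc: "?M \<in> carrier_mat 7 7" and Jc: "?J \<in> carrier_mat 7 7"
    using M by auto
  have JMy: "?J *\<^sub>v (?M *\<^sub>v y) \<in> carrier_vec 7"
    using Jc Mc y by (metis mult_mat_vec_carrier)
  have "lf (?M *\<^sub>v x) (?M *\<^sub>v y) = (?M *\<^sub>v x) \<bullet> (?J *\<^sub>v (?M *\<^sub>v y))"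
    using Mc x y by (intro lf_eq_scalar_prod_J) auto
  also have "\<dots> = (?J *\<^sub>v (?M *\<^sub>v y)) \<bullet> (?M *\<^sub>v x)"
    using Mc x JMy by (metis comm_scalar_prod mult_mat_vec_carrier)
  also have "\<dots> = (transpose_mat ?M *\<^sub>v (?J *\<^sub>v (?M *\<^sub>v y))) \<bullet> x"
    using transpose_vec_mult_scalar [OF Mc x JMy] by simp
  also have "transpose_mat ?M *\<^sub>v (?J *\<^sub>v (?M *\<^sub>v y)) = (transpose_mat ?M * ?J * ?M) *\<^sub>v y"
    using Mc Jc y by (simp add: assoc_mult_mat_vec [of _ 7 7 _ 7])
  also have "transpose_mat ?M * ?J * ?M = map_mat real_of_int (transpose_mat M * J * M)"
    using M by (simp add: of_int_hom.mat_hom_mult [of _ 7 7 _ 7] map_mat_transpose)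
  moreover have "map_mat real_of_int (transpose_mat M * J * M) *\<^sub>v y \<in> carrier_vec 7"
    using M y by (metis J_carrier map_carrier_mat mult_carrier_mat mult_mat_vec_carrier
        transpose_carrier_mat)
  ultimately show ?thesis
    using x by (metis comm_scalar_prod)
qed

text \<open>By Cauchy--Schwarz in the first six coordinates, two points on opposite sheets of
  \<open>lf x x = -1\<close> have \<open>lf\<close>-product at least \<open>1\<close>.\<close>

lemma hyperboloid_same_sheet:
  fixes a b :: "real vec"
  assumes aa: "lf a a = -1" and bb: "lf b b = -1" and a6: "a $ 6 > 0" and ab: "lf a b < 0"
  shows "b $ 6 > 0"
proof (rule ccontr)
  assume "\<not> b $ 6 > 0"
  define Sa where "Sa = (\<Sum>i<6. a $ i * a $ i)"
  define Sb where "Sb = (\<Sum>i<6. b $ i * b $ i)"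
  define Sab where "Sab = (\<Sum>i<6. a $ i * b $ i)"
  have Sa: "Sa = (a $ 6)\<^sup>2 - 1" and Sb: "Sb = (b $ 6)\<^sup>2 - 1" and Sab: "Sab < a $ 6 * b $ 6"
    using aa bb ab unfolding lf_def Sa_def Sb_def Sab_def by (simp_all add: power2_eq_square)
  have "Sb \<ge> 0"
    unfolding Sb_def by (intro sum_nonneg) simp
  with \<open>\<not> b $ 6 > 0\<close> Sb have b6: "b $ 6 < 0"
    by (cases "b $ 6 = 0") auto
  have "0 \<le> (\<Sum>i<6. (b $ 6 * a $ i - a $ 6 * b $ i)\<^sup>2)"
    by (intro sum_nonneg) simp
  also have "\<dots> = (b $ 6)\<^sup>2 * Sa - 2 * (b $ 6) * (a $ 6) * Sab + (a $ 6)\<^sup>2 * Sb"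
    unfolding Sa_def Sb_def Sab_def
    by (simp add: power2_diff sum.distrib sum_subtractf sum_distrib_left power_mult_distrib
        algebra_simps power2_eq_square)
  finally have "2 * (b $ 6) * (a $ 6) * Sab \<le> 2 * (a $ 6)\<^sup>2 * (b $ 6)\<^sup>2 - (a $ 6)\<^sup>2 - (b $ 6)\<^sup>2"
    unfolding Sa Sb by (simp add: algebra_simps)
  moreover have "(b $ 6 * a $ 6) * Sab > (b $ 6 * a $ 6) * (a $ 6 * b $ 6)"
    using Sab a6 b6 by (simp add: mult_neg_pos mult_less_cancel_left_neg)
  ultimately have "(a $ 6)\<^sup>2 + (b $ 6)\<^sup>2 < 0"
    by (simp add: power2_eq_square algebra_simps)
  then show False
    by (smt (verit) zero_le_power2)
qed

lemma Gamma6I: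
  assumes M: "M \<in> carrier_mat 7 7"
    and pres: "\<And>x y. x \<in> carrier_vec 7 \<Longrightarrow> y \<in> carrier_vec 7 \<Longrightarrow>
        lf (map_mat real_of_int M *\<^sub>v x) (map_mat real_of_int M *\<^sub>v y) = lf x y"
    and M66: "M $$ (6,6) > 0"
  shows "M \<in> Gamma6"
proof -
  let ?M = "map_mat real_of_int M"
  have "?M *\<^sub>v x \<in> hyp6" if x: "x \<in> hyp6" for x
  proof -
    let ?e = "unit_vec 7 6 :: real vec"
    have xc: "x \<in> carrier_vec 7" and xx: "lf x x = -1" and x6: "x $ 6 > 0"
      using x by (auto simp: hyp6_def)
    have "(?M *\<^sub>v x) $ 6 > 0"
    proof (rule hyperboloid_same_sheet [of "?M *\<^sub>v ?e"])
      show "lf (?M *\<^sub>v ?e) (?M *\<^sub>v ?e) = -1" "lf (?M *\<^sub>v x) (?M *\<^sub>v x) = -1"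
        using pres [of ?e ?e] pres [OF xc xc] xx by (simp_all add: lf_def lessThan_Suc [of 5, simplified])
      show "(?M *\<^sub>v ?e) $ 6 > 0"
        using M M66 by simp
      show "lf (?M *\<^sub>v ?e) (?M *\<^sub>v x) < 0"
        using pres [of ?e x] xc x6 by (simp add: lf_def)
    qed
    then show ?thesis
      using M xc pres [OF xc xc] xx by (simp add: hyp6_def)
  qed
  then show ?thesis
    unfolding Gamma6_def using M pres by blast
qed

lemma unit_vec_scalar_prod_mult_unit_vec:
  fixes N :: "'a::comm_ring_1 mat"
  assumes "N \<in> carrier_mat n n" "b < n" "c < n"
  shows "unit_vec n b \<bullet> (N *\<^sub>v unit_vec n c) = N $$ (b,c)"
  using assms by simp

lemma Gamma6_iff:
  "M \<in> Gamma6 \<longleftrightarrow> M \<in> carrier_mat 7 7 \<and> transpose_mat M * J * M = J \<and> M $$ (6,6) > 0"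
proof
  assume MG: "M \<in> Gamma6"
  then have M: "M \<in> carrier_mat 7 7"
    and pres: "\<And>x y. x \<in> carrier_vec 7 \<Longrightarrow> y \<in> carrier_vec 7 \<Longrightarrow>
        lf (map_mat real_of_int M *\<^sub>v x) (map_mat real_of_int M *\<^sub>v y) = lf x y"
    and hyp: "\<And>x. x \<in> hyp6 \<Longrightarrow> map_mat real_of_int M *\<^sub>v x \<in> hyp6"
    by (auto simp: Gamma6_def)
  have "transpose_mat M * J * M = J"
  proof (rule eq_matI)
    fix b c assume "b < dim_row J" "c < dim_col J"
    then have bc: "b < 7" "c < 7" by auto
    let ?N = "transpose_mat M * J * M"
    have Nc: "map_mat real_of_int ?N \<in> carrier_mat 7 7"
      using M by (metis J_carrier map_carrier_mat mult_carrier_mat transpose_carrier_mat)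
    have "real_of_int (?N $$ (b,c)) = map_mat real_of_int ?N $$ (b,c)"
      using M bc by simp
    also have "\<dots> = unit_vec 7 b \<bullet> (map_mat real_of_int ?N *\<^sub>v unit_vec 7 c)"
      using Nc bc by (rule unit_vec_scalar_prod_mult_unit_vec [symmetric])
    also have "\<dots> = lf (unit_vec 7 b) (unit_vec 7 c)"
      using lf_mult_mat_vec [OF M, of "unit_vec 7 b" "unit_vec 7 c"] pres by simp
    also have "\<dots> = map_mat real_of_int J $$ (b,c)"
      using bc by (simp add: lf_eq_scalar_prod_J unit_vec_scalar_prod_mult_unit_vec)
    also have "\<dots> = real_of_int (J $$ (b,c))"
      using bc by simp
    finally show "?N $$ (b,c) = J $$ (b,c)" by simp
  qed (use M in auto)
  moreover have "unit_vec 7 6 \<in> hyp6"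
    by (simp add: hyp6_def lf_def)
  then have "M $$ (6,6) > 0"
    using hyp [of "unit_vec 7 6"] M by (simp add: hyp6_def)
  ultimately show "M \<in> carrier_mat 7 7 \<and> transpose_mat M * J * M = J \<and> M $$ (6,6) > 0"
    using M by blast
next
  assume "M \<in> carrier_mat 7 7 \<and> transpose_mat M * J * M = J \<and> M $$ (6,6) > 0"
  then show "M \<in> Gamma6"
    using lf_mult_mat_vec lf_eq_scalar_prod_J by (intro Gamma6I) auto
qed

lemma int_mat_mult_left_right_inverse:
  assumes X: "(X :: int mat) \<in> carrier_mat n n" and Y: "Y \<in> carrier_mat n n"
    and XY: "X * Y = 1\<^sub>m n"
  shows "Y * X = 1\<^sub>m n"
proof -
  have "map_mat real_of_int X * map_mat real_of_int Y = 1\<^sub>m n"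
    using XY X Y by (metis of_int_hom.mat_hom_mult of_int_hom.mat_hom_one)
  then have "map_mat real_of_int Y * map_mat real_of_int X = 1\<^sub>m n"
    by (rule mat_mult_left_right_inverse [rotated 2]) (use X Y in auto)
  then have "map_mat real_of_int (Y * X) = map_mat real_of_int (1\<^sub>m n)"
    using X Y by (metis of_int_hom.mat_hom_mult of_int_hom.mat_hom_one)
  then show ?thesis
    by (metis of_int_hom.mat_hom_inj)
qed

lemmas assoc_mult_mat7 = assoc_mult_mat [of _ 7 7 _ 7 _ 7]
lemmas mult_carrier_mat7 = mult_carrier_mat [of _ 7 7 _ 7]

lemma Gamma6_carrier: "M \<in> Gamma6 \<Longrightarrow> M \<in> carrier_mat 7 7"
  by (simp add: Gamma6_def)

lemma Gamma6_mult: "M \<in> Gamma6 \<Longrightarrow> N \<in> Gamma6 \<Longrightarrow> M * N \<in> Gamma6"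
proof -
  assume "M \<in> Gamma6" "N \<in> Gamma6"
  then have M: "M \<in> carrier_mat 7 7" and N: "N \<in> carrier_mat 7 7"
    by (auto simp: Gamma6_def)
  have "map_mat real_of_int (M * N) *\<^sub>v x = map_mat real_of_int M *\<^sub>v (map_mat real_of_int N *\<^sub>v x)"
    if "x \<in> carrier_vec 7" for x
    using M N that by (simp add: of_int_hom.mat_hom_mult [OF M N] assoc_mult_mat_vec [of _ 7 7 _ 7])
  then show ?thesis
    using \<open>M \<in> Gamma6\<close> \<open>N \<in> Gamma6\<close> M N unfolding Gamma6_def by (simp add: hyp6_def)
qed

lemma Gamma6_inverse:
  assumes "M \<in> Gamma6"
  shows "J * transpose_mat M * J \<in> Gamma6" and "(J * transpose_mat M * J) * M = 1\<^sub>m 7"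
    and "M * (J * transpose_mat M * J) = 1\<^sub>m 7"
proof -
  have M: "M \<in> carrier_mat 7 7" and MJM: "transpose_mat M * J * M = J" and M66: "M $$ (6,6) > 0"
    using assms by (auto simp: Gamma6_iff)
  define N where "N = J * transpose_mat M * J"
  have Nc: "N \<in> carrier_mat 7 7"
    unfolding N_def using M by (metis J_carrier mult_carrier_mat transpose_carrier_mat)
  have JJX: "J * (J * X) = X" if "X \<in> carrier_mat 7 7" for X
    using that J_mult_J by (simp add: assoc_mult_mat7 [symmetric])
  have "N * M = J * (transpose_mat M * J * M)"
    unfolding N_def using M by (simp add: assoc_mult_mat7 mult_carrier_mat7)
  then have NM: "N * M = 1\<^sub>m 7"
    using MJM J_mult_J by simp
  then have MN: "M * N = 1\<^sub>m 7"
    by (rule int_mat_mult_left_right_inverse [OF Nc M])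
  have "M * J * transpose_mat M = M * N * J"
    unfolding N_def using M J_mult_J by (simp add: assoc_mult_mat7 mult_carrier_mat7)
  then have MJMt: "M * J * transpose_mat M = J"
    using MN by simp
  have "transpose_mat N * J * N = (J * M * J) * J * (J * transpose_mat M * J)"
    unfolding N_def using M
    by (simp add: transpose_mult [of _ 7 7 _ 7] transpose_J assoc_mult_mat7 mult_carrier_mat7)
  also have "\<dots> = J * (M * J * transpose_mat M) * J"
    using M by (simp add: assoc_mult_mat7 mult_carrier_mat7 JJX)
  finally have NJN: "transpose_mat N * J * N = J"
    using MJMt J_mult_J by (simp add: assoc_mult_mat7)
  have "N $$ (6,6) = M $$ (6,6)"
    unfolding N_def using M
    by (simp add: J_def scalar_prod_def sum.delta' atLeast0LessThan lessThan_Suc [of 6, simplified])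
  then show "J * transpose_mat M * J \<in> Gamma6"
    using Nc NJN M66 unfolding N_def [symmetric] by (simp add: Gamma6_iff)
  show "(J * transpose_mat M * J) * M = 1\<^sub>m 7" "M * (J * transpose_mat M * J) = 1\<^sub>m 7"
    using NM MN unfolding N_def by simp_all
qed

lemma G6_simps [simp]: "carrier G6 = Gamma6" "mult G6 = (*)" "one G6 = 1\<^sub>m 7"
  by (simp_all add: G6_def)

lemma one_in_Gamma6: "1\<^sub>m 7 \<in> Gamma6"
  by (simp add: Gamma6_iff transpose_J)

lemma group_G6: "group G6"
proof (rule groupI)
  show "\<one>\<^bsub>G6\<^esub> \<in> carrier G6"
    by (simp add: one_in_Gamma6)
next
  fix x assume "x \<in> carrier G6"
  then show "\<exists>y\<in>carrier G6. y \<otimes>\<^bsub>G6\<^esub> x = \<one>\<^bsub>G6\<^esub>"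
    using Gamma6_inverse by auto
qed (auto simp: Gamma6_mult intro: assoc_mult_mat7 dest: Gamma6_carrier)

lemma inv_G6: "M \<in> Gamma6 \<Longrightarrow> inv\<^bsub>G6\<^esub> M = J * transpose_mat M * J"
  using group.inv_equality [OF group_G6, of "J * transpose_mat M * J" M] Gamma6_inverse by simp

lemma Gamma6_preserves_lf:
  assumes M: "M \<in> Gamma6" and x: "x \<in> carrier_vec 7" and y: "y \<in> carrier_vec 7"
  shows "lf (M *\<^sub>v x) (M *\<^sub>v y) = lf x y"
proof -
  have Mc: "M \<in> carrier_mat 7 7"
    using M by (rule Gamma6_carrier)
  have "real_of_int (lf (M *\<^sub>v x) (M *\<^sub>v y))
      = lf (map_mat real_of_int M *\<^sub>v map_vec real_of_int x) (map_mat real_of_int M *\<^sub>v map_vec real_of_int y)"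
    using Mc x y by (simp add: lf_of_int [symmetric] of_int_hom.mult_mat_vec_hom)
  also have "\<dots> = lf (map_vec real_of_int x) (map_vec real_of_int y)"
    using M x y by (simp add: Gamma6_def)
  finally show ?thesis
    using x y by (simp add: lf_of_int)
qed


section \<open>Reflections\<close>

definition refl_mat :: "int vec \<Rightarrow> int mat" where
  "refl_mat v = mat 7 7 (\<lambda>(i,c). refl_vec v (unit_vec 7 c) $ i)"

lemma R_eq_refl_mat: "R j = refl_mat (u j)"
  by (simp add: R_def refl_mat_def e_def)

lemma refl_mat_dims [simp]: "dim_row (refl_mat v) = 7" "dim_col (refl_mat v) = 7"
  by (simp_all add: refl_mat_def)

lemma refl_mat_carrier [simp]: "refl_mat v \<in> carrier_mat 7 7"
  by (simp add: refl_mat_def)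

lemma refl_mat_entry:
  "dim_vec v = 7 \<Longrightarrow> i < 7 \<Longrightarrow> c < 7 \<Longrightarrow>
    refl_mat v $$ (i,c) = (if i = c then 1 else 0) - 2 * lf (unit_vec 7 c) v * v $ i"
  by (simp add: refl_mat_def refl_vec_def)

lemma refl_mat_mult_vec:
  fixes x :: "real vec"
  assumes v: "dim_vec v = 7" and x: "x \<in> carrier_vec 7"
  defines "w \<equiv> map_vec real_of_int v"
  shows "map_mat real_of_int (refl_mat v) *\<^sub>v x = x - (2 * lf x w) \<cdot>\<^sub>v w"
proof (rule eq_vecI)
  fix i assume "i < dim_vec (x - (2 * lf x w) \<cdot>\<^sub>v w)"
  then have i: "i < 7"
    using v unfolding w_def by simp
  have "(map_mat real_of_int (refl_mat v) *\<^sub>v x) $ i = (\<Sum>c<7. real_of_int (refl_mat v $$ (i,c)) * x $ c)"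
    using x i by (simp add: scalar_prod_def atLeast0LessThan)
  also have "\<dots> = (\<Sum>c<7. ((if i = c then 1 else 0) - 2 * lf (unit_vec 7 c) w * w $ i) * x $ c)"
    using v i unfolding w_def by (intro sum.cong) (auto simp: refl_mat_entry lf_unit_vec_left)
  also have "\<dots> = x $ i - 2 * (\<Sum>c<7. x $ c * lf (unit_vec 7 c) w) * w $ i"
    using i by (simp add: algebra_simps sum_subtractf sum_distrib_left sum_distrib_right
        if_distrib [of "\<lambda>a. _ * a"] cong: if_cong)
  finally show "(map_mat real_of_int (refl_mat v) *\<^sub>v x) $ i = (x - (2 * lf x w) \<cdot>\<^sub>v w) $ i"
    using v x i unfolding w_def by (simp add: lf_eq_sum_unit_vec [symmetric])
qed (use v x in \<open>simp add: w_def\<close>)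

lemma refl_mat_in_Gamma6:
  assumes v: "dim_vec v = 7" and vv: "lf v v = 1"
  shows "refl_mat v \<in> Gamma6"
proof (rule Gamma6I)
  define w where "w = map_vec real_of_int v"
  have w: "w \<in> carrier_vec 7"
    using v by (intro carrier_vecI) (simp add: w_def)
  have ww: "lf w w = 1"
    using lf_of_int [where 'a = real, OF carrier_vecI [OF v] carrier_vecI [OF v]] vv by (simp add: w_def)
  fix x y :: "real vec"
  assume x: "x \<in> carrier_vec 7" and y: "y \<in> carrier_vec 7"
  show "lf (map_mat real_of_int (refl_mat v) *\<^sub>v x) (map_mat real_of_int (refl_mat v) *\<^sub>v y) = lf x y"
    using v x y w ww unfolding refl_mat_mult_vec [OF v x] refl_mat_mult_vec [OF v y] w_def [symmetric]
    by (simp add: lf_diff_smult lf_commute [of w x] lf_commute [of w y])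
next
  show "refl_mat v $$ (6,6) > 0"
    using v by (simp add: refl_mat_entry lf_unit_vec_left mult.assoc add_pos_nonneg)
qed simp

lemma mult_refl_mat:
  assumes M: "M \<in> Gamma6" and v: "dim_vec v = 7"
  shows "M * refl_mat v = refl_mat (M *\<^sub>v v) * M"
proof (rule eq_matI)
  have Mc: "M \<in> carrier_mat 7 7"
    using M by (rule Gamma6_carrier)
  fix i c assume "i < dim_row (refl_mat (M *\<^sub>v v) * M)" "c < dim_col (refl_mat (M *\<^sub>v v) * M)"
  then have i: "i < 7" and c: "c < 7"
    using Mc by auto
  have Mv: "dim_vec (M *\<^sub>v v) = 7"
    using Mc by simp
  have "lf (M *\<^sub>v unit_vec 7 c) (M *\<^sub>v v) = (\<Sum>m<7. M $$ (m,c) * lf (unit_vec 7 m) (M *\<^sub>v v))"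
    using Mc c by (auto simp: lf_eq_sum_unit_vec [of "M *\<^sub>v unit_vec 7 c"] intro!: sum.cong)
  moreover have "lf (M *\<^sub>v unit_vec 7 c) (M *\<^sub>v v) = lf (unit_vec 7 c) v"
    using M v by (intro Gamma6_preserves_lf carrier_vecI) auto
  ultimately have key: "(\<Sum>m<7. M $$ (m,c) * lf (unit_vec 7 m) (M *\<^sub>v v)) = lf (unit_vec 7 c) v"
    by simp
  have "(M * refl_mat v) $$ (i,c)
      = (\<Sum>m<7. M $$ (i,m) * ((if m = c then 1 else 0) - 2 * lf (unit_vec 7 c) v * v $ m))"
    using Mc v i c by (auto simp: scalar_prod_def refl_mat_entry atLeast0LessThan intro!: sum.cong)
  also have "\<dots> = M $$ (i,c) - 2 * lf (unit_vec 7 c) v * (M *\<^sub>v v) $ i"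
    using Mc v i c by (simp add: algebra_simps sum_subtractf sum_distrib_left scalar_prod_def
        atLeast0LessThan if_distrib [of "\<lambda>a. _ * a"] cong: if_cong)
  also have "\<dots> = M $$ (i,c) - 2 * (M *\<^sub>v v) $ i * (\<Sum>m<7. M $$ (m,c) * lf (unit_vec 7 m) (M *\<^sub>v v))"
    by (simp add: key)
  also have "\<dots> = (\<Sum>m<7. ((if i = m then 1 else 0) - 2 * lf (unit_vec 7 m) (M *\<^sub>v v) * (M *\<^sub>v v) $ i)
      * M $$ (m,c))"
    using i by (simp add: algebra_simps sum_subtractf sum_distrib_left
        if_distrib [of "\<lambda>a. _ * a"] cong: if_cong)
  also have "\<dots> = (refl_mat (M *\<^sub>v v) * M) $$ (i,c)"
    using Mc Mv i c by (auto simp: scalar_prod_def refl_mat_entry atLeast0LessThan intro!: sum.cong)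
  finally show "(M * refl_mat v) $$ (i,c) = (refl_mat (M *\<^sub>v v) * M) $$ (i,c)" .
qed (use Gamma6_carrier [OF M] in auto)

lemma refl_mat_uminus:
  assumes "dim_vec v = 7"
  shows "refl_mat (- v) = refl_mat v"
proof -
  have "(- a) \<cdot>\<^sub>v (- v) = a \<cdot>\<^sub>v v" for a :: int
    by (rule eq_vecI) auto
  then show ?thesis
    using assms by (simp add: refl_mat_def refl_vec_def lf_uminus_right)
qed

lemma lf_u_u: "1 \<le> j \<Longrightarrow> j \<le> 27 \<Longrightarrow> lf (u j) (u j) = 1"
proof -
  have "\<forall>j\<in>set [1..<28]. lf (u j) (u j) = 1"
    by (simp add: upt_rec lf_explicit u_def e_def pairs_def cs_def)
  then show "1 \<le> j \<Longrightarrow> j \<le> 27 \<Longrightarrow> lf (u j) (u j) = 1"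
    by auto
qed

lemma dim_u: "dim_vec (u j) = 7"
  by (simp add: u_def e_def)

lemma R_in_Gamma6: "1 \<le> j \<Longrightarrow> j \<le> 27 \<Longrightarrow> R j \<in> Gamma6"
  by (simp add: R_eq_refl_mat refl_mat_in_Gamma6 dim_u lf_u_u)

lemma R_carrier [simp]: "R j \<in> carrier_mat 7 7"
  by (simp add: R_eq_refl_mat)

section \<open>Sign changes, reflection words and \<open>Hgrp\<close>\<close>

lemma kdiag_dims [simp]: "dim_row (kdiag N) = 7" "dim_col (kdiag N) = 7"
  by (simp_all add: kdiag_def)

lemma kdiag_carrier [simp]: "kdiag N \<in> carrier_mat 7 7"
  by (simp add: kdiag_def)

lemma kdiag_empty: "kdiag {} = 1\<^sub>m 7"
  by (rule eq_matI) (auto simp: kdiag_def)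

lemma kdiag_mult: "kdiag X * kdiag Y = kdiag (sym_diff X Y)"
proof (rule eq_matI)
  fix i c assume "i < dim_row (kdiag (sym_diff X Y))" "c < dim_col (kdiag (sym_diff X Y))"
  then have i: "i < 7" and c: "c < 7" by auto
  let ?s = "\<lambda>N i. if i < 6 \<and> i + 1 \<in> N then -1 else (1::int)"
  have "(kdiag X * kdiag Y) $$ (i,c)
      = (\<Sum>m\<in>{0..<7}. (if i = m then ?s X i else 0) * (if m = c then ?s Y m else 0))"
    using i c by (simp add: kdiag_def scalar_prod_def)
  also have "\<dots> = (\<Sum>m\<in>{0..<7}. if m = i then (if i = c then ?s X i * ?s Y i else 0) else 0)"
    by (rule sum.cong) auto
  also have "\<dots> = kdiag (sym_diff X Y) $$ (i,c)"
    using i c by (auto simp: kdiag_def)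
  finally show "(kdiag X * kdiag Y) $$ (i,c) = kdiag (sym_diff X Y) $$ (i,c)" .
qed auto

lemma kdiag_mult_assoc: "Z \<in> carrier_mat 7 7 \<Longrightarrow> kdiag X * (kdiag Y * Z) = kdiag (sym_diff X Y) * Z"
  by (simp add: assoc_mult_mat7 [symmetric] kdiag_mult)

lemma refl_mat_unit_vec: "p < 6 \<Longrightarrow> refl_mat (unit_vec 7 p) = kdiag {Suc p}"
  by (rule eq_matI) (auto simp: refl_mat_entry lf_unit_vec_left kdiag_def)

lemma R_coordinate: "1 \<le> j \<Longrightarrow> j \<le> 6 \<Longrightarrow> R j = kdiag {j}"
  using refl_mat_unit_vec [of "j - 1"]
  by (simp add: R_eq_refl_mat u_def e_def refl_mat_uminus)

text \<open>For \<open>j \<ge> 7\<close> the matrix \<open>k j\<close> is \<open>kdiag (colour j)\<close>; for \<open>j \<le> 6\<close> the reflection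
  \<open>R j\<close> itself is \<open>kdiag (colour j)\<close>.\<close>

definition colour :: "nat \<Rightarrow> nat set" where
  "colour j = (if j \<le> 6 then {j} else Ns ! (j - 7))"

definition word_mat :: "nat list \<Rightarrow> int mat" where
  "word_mat w = foldr (*) (map R w) (1\<^sub>m 7)"

definition word_colour :: "nat list \<Rightarrow> nat set" where
  "word_colour w = foldr sym_diff (map colour w) {}"

lemma word_mat_simps [simp]:
  "word_mat [] = 1\<^sub>m 7" "word_mat (j # w) = R j * word_mat w"
  by (simp_all add: word_mat_def)

lemma word_colour_simps [simp]:
  "word_colour [] = {}" "word_colour (j # w) = sym_diff (colour j) (word_colour w)"
  by (simp_all add: word_colour_def)

lemma word_mat_carrier [simp]: "word_mat w \<in> carrier_mat 7 7"
  by (induction w) (auto intro: mult_carrier_mat7)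

lemma word_mat_append: "word_mat (v @ w) = word_mat v * word_mat w"
  by (induction v) (auto simp: assoc_mult_mat7 left_mult_one_mat [of _ 7 7])

lemma word_colour_append: "word_colour (v @ w) = sym_diff (word_colour v) (word_colour w)"
  by (induction v) auto

lemma word_mat_in_Gamma6: "set w \<subseteq> {1..27} \<Longrightarrow> word_mat w \<in> Gamma6"
  by (induction w) (auto simp: one_in_Gamma6 intro!: Gamma6_mult R_in_Gamma6)

lemma Ns_subset: "7 \<le> j \<Longrightarrow> j \<le> 27 \<Longrightarrow> Ns ! (j - 7) \<subseteq> {1..6}"
proof -
  have "\<forall>i\<in>set [0..<21]. Ns ! i \<subseteq> {1..6}"
    by (simp add: Ns_def upt_rec)
  then show "7 \<le> j \<Longrightarrow> j \<le> 27 \<Longrightarrow> Ns ! (j - 7) \<subseteq> {1..6}"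
    by auto
qed

lemma colour_subset: "1 \<le> j \<Longrightarrow> j \<le> 27 \<Longrightarrow> colour j \<subseteq> {1..6}"
  using Ns_subset by (auto simp: colour_def)

definition coord_word :: "nat set \<Rightarrow> nat list" where
  "coord_word N = filter (\<lambda>i. i \<in> N) [1..<7]"

lemma coord_word:
  assumes "N \<subseteq> {1..6}"
  shows "word_mat (coord_word N) = kdiag N" and "word_colour (coord_word N) = N"
    and "set (coord_word N) \<subseteq> {1..6}"
proof -
  have "distinct xs \<Longrightarrow> set xs \<subseteq> {1..6} \<Longrightarrow>
      word_mat xs = kdiag (set xs) \<and> word_colour xs = set xs"
    for xs
  proof (induction xs)
    case (Cons x xs)
    then have "sym_diff {x} (set xs) = insert x (set xs)"
      by auto
    with Cons show ?case
      by (simp add: R_coordinate kdiag_mult colour_def)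
  qed (simp add: kdiag_empty)
  moreover have "set (coord_word N) = N"
    using assms by (auto simp: coord_word_def)
  ultimately show "word_mat (coord_word N) = kdiag N" "word_colour (coord_word N) = N"
    "set (coord_word N) \<subseteq> {1..6}"
    using assms by (auto simp: coord_word_def)
qed

lemma kdiag_in_Gamma6: "N \<subseteq> {1..6} \<Longrightarrow> kdiag N \<in> Gamma6"
  using coord_word [of N] word_mat_in_Gamma6 [of "coord_word N"] by force

definition Hgens :: "int mat set" where
  "Hgens = {l * R j * l * k j | l j. l \<in> K6 \<and> 7 \<le> j \<and> j \<le> 27}"

lemma Hgrp_eq_generate: "Hgrp = generate G6 Hgens"
  unfolding Hgrp_def Hgens_def ..

lemma k_eq_kdiag_colour: "7 \<le> j \<Longrightarrow> k j = kdiag (colour j)"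
  by (simp add: k_def colour_def)

lemma Hgens_subset_Gamma6: "Hgens \<subseteq> Gamma6"
proof
  fix x assume "x \<in> Hgens"
  then obtain N j where x: "x = kdiag N * R j * kdiag N * k j" "N \<subseteq> {1..6}" "7 \<le> j" "j \<le> 27"
    by (auto simp: Hgens_def K6_def)
  show "x \<in> Gamma6"
    unfolding x(1) k_eq_kdiag_colour [OF x(3)]
    using x colour_subset [of j] by (intro Gamma6_mult kdiag_in_Gamma6 R_in_Gamma6) auto
qed

lemma subgroup_Hgrp: "subgroup Hgrp G6"
  unfolding Hgrp_eq_generate
  using group.generate_is_subgroup [OF group_G6] Hgens_subset_Gamma6 by simp

lemma Hgrp_subset_Gamma6: "Hgrp \<subseteq> Gamma6"
  using subgroup.subset [OF subgroup_Hgrp] by simp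

lemma letter_generator_in_Hgrp:
  assumes s: "1 \<le> s" "s \<le> 27" and N: "N \<subseteq> {1..6}"
  shows "kdiag N * R s * kdiag N * kdiag (colour s) \<in> Hgrp"
proof (cases "s \<le> 6")
  case True
  then have "kdiag N * R s * kdiag N * kdiag (colour s) = 1\<^sub>m 7"
    using s by (simp add: R_coordinate colour_def kdiag_mult flip: kdiag_empty)
      (rule arg_cong [where f = kdiag], blast)
  then show ?thesis
    using subgroup.one_closed [OF subgroup_Hgrp] by simp
next
  case False
  then have "kdiag N * R s * kdiag N * kdiag (colour s) \<in> Hgens"
    using s N unfolding Hgens_def K6_def
    by (auto simp: k_eq_kdiag_colour [symmetric] intro!: exI [of _ "kdiag N"] exI [of _ s])
  then show ?thesis
    unfolding Hgrp_eq_generate by (rule generate.incl)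
qed

text \<open>Along a word the letter generators telescope, the sign change \<open>N\<close> being replaced by
  \<open>N \<Delta> colour s\<close> after the letter \<open>s\<close>.\<close>

lemma signed_word_Cons:
  fixes N :: "nat set" and s :: nat
  defines "N' \<equiv> sym_diff N (colour s)"
  shows "kdiag N * word_mat (s # w) * kdiag N * kdiag (word_colour (s # w))
    = (kdiag N * R s * kdiag N * kdiag (colour s)) * (kdiag N' * word_mat w * kdiag N' * kdiag (word_colour w))"
proof -
  define Z where "Z = word_mat w * (kdiag N' * kdiag (word_colour w))"
  have Z: "Z \<in> carrier_mat 7 7"
    unfolding Z_def by (simp add: mult_carrier_mat7)
  have "sym_diff N (sym_diff (colour s) N') = {}"
    unfolding N'_def by blast
  then have cancel: "kdiag N * (kdiag (colour s) * (kdiag N' * Z)) = Z"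
    using Z by (simp only: kdiag_mult_assoc mult_carrier_mat7 kdiag_carrier kdiag_empty left_mult_one_mat)
  have "kdiag N' * kdiag (word_colour w) = kdiag N * kdiag (word_colour (s # w))"
    unfolding N'_def by (simp add: kdiag_mult) (rule arg_cong [where f = kdiag], blast)
  then have Z_eq: "Z = word_mat w * kdiag N * kdiag (word_colour (s # w))"
    unfolding Z_def by (simp add: assoc_mult_mat7)
  have "(kdiag N * R s * kdiag N * kdiag (colour s)) * (kdiag N' * word_mat w * kdiag N' * kdiag (word_colour w))
      = kdiag N * (R s * (kdiag N * (kdiag (colour s) * (kdiag N' * Z))))"
    unfolding Z_def by (simp add: assoc_mult_mat7 mult_carrier_mat7)
  also have "\<dots> = kdiag N * (R s * Z)"
    by (simp only: cancel)
  also have "\<dots> = kdiag N * word_mat (s # w) * kdiag N * kdiag (word_colour (s # w))"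
    unfolding Z_eq by (simp add: assoc_mult_mat7 mult_carrier_mat7)
  finally show ?thesis
    by (rule sym)
qed

lemma signed_word_in_Hgrp:
  "set w \<subseteq> {1..27} \<Longrightarrow> N \<subseteq> {1..6} \<Longrightarrow>
    kdiag N * word_mat w * kdiag N * kdiag (word_colour w) \<in> Hgrp"
proof (induction w arbitrary: N)
  case Nil
  then show ?case
    using subgroup.one_closed [OF subgroup_Hgrp]
    by (simp add: kdiag_mult kdiag_empty right_mult_one_mat [of _ 7 7])
next
  case (Cons s w)
  then have s: "1 \<le> s" "s \<le> 27" and w: "set w \<subseteq> {1..27}"
    by auto
  have "sym_diff N (colour s) \<subseteq> {1..6}"
    using Cons.prems(2) colour_subset [OF s] by auto
  then have IH: "kdiag (sym_diff N (colour s)) * word_mat w * kdiag (sym_diff N (colour s))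
      * kdiag (word_colour w) \<in> Hgrp"
    by (rule Cons.IH [OF w])
  show ?case
    unfolding signed_word_Cons
    using subgroup.m_closed [OF subgroup_Hgrp letter_generator_in_Hgrp [OF s Cons.prems(2)] IH] by simp
qed

lemma word_mat_in_Hgrp: "set w \<subseteq> {1..27} \<Longrightarrow> word_colour w = {} \<Longrightarrow> word_mat w \<in> Hgrp"
  using signed_word_in_Hgrp [of w "{}"]
  by (simp add: kdiag_empty right_mult_one_mat [of _ 7 7] left_mult_one_mat [of _ 7 7])

section \<open>Conjugation by \<open>A\<close>\<close>

lemma A_carrier [simp]: "A \<in> carrier_mat 7 7"
  unfolding A_def by (rule carrier_matI) (simp_all add: mat_of_rows_list_def)

lemma A_in_Gamma6: "A \<in> Gamma6"
proof -
  have "transpose_mat A * J * A = foldr (*) [transpose_mat A, J, A] (1\<^sub>m 7)"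
    by (simp add: assoc_mult_mat7 right_mult_one_mat [of _ 7 7] mult_carrier_mat7)
  also have "\<dots> = mat_of_rows_list 7 (foldr rows_mult (map mat_to_list [transpose_mat A, J, A]) (mat_to_list (1\<^sub>m 7)))"
    by (rule foldr_mult_eq_rows_mult) simp_all
  also have "\<dots> = mat_of_rows_list 7 (mat_to_list J)"
    by (simp add: A_def J_def mat_to_list_def mat_of_rows_list_def rows_mult_def upt_rec)
  finally have "transpose_mat A * J * A = J"
    by (simp add: mat_of_rows_list_mat_to_list)
  moreover have "A $$ (6,6) = 2"
    by (simp add: A_def mat_of_rows_list_def)
  ultimately show ?thesis
    by (simp add: Gamma6_iff)
qed

text \<open>\<open>A\<close> maps each root \<open>u\<^sub>j\<close>, up to sign, to the image of \<open>u\<^sub>\<sigma>\<^sub>(\<^sub>j\<^sub>)\<close> under the sign change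
  \<open>R\<^sub>2 = kdiag {2}\<close>, for the permutation \<open>\<sigma> = root_perm\<close> of \<open>{1..27}\<close>.\<close>

definition root_perm :: "nat \<Rightarrow> nat" where
  "root_perm j = [1,11,5,20,18,3,17,25,21,7,4,14,10,2,16,6,23,19,27,9,12,13,24,26,8,22,15] ! (j - 1)"

lemma root_perm_range: "1 \<le> j \<Longrightarrow> j \<le> 27 \<Longrightarrow> root_perm j \<in> {1..27}"
proof -
  have "\<forall>j\<in>set [1..<28]. root_perm j \<in> {1..27}"
    by (simp add: root_perm_def upt_rec)
  then show "1 \<le> j \<Longrightarrow> j \<le> 27 \<Longrightarrow> root_perm j \<in> {1..27}"
    by auto
qed

lemma all_less_7: "(\<forall>i<7. P i) \<longleftrightarrow> P 0 \<and> P 1 \<and> P 2 \<and> P 3 \<and> P 4 \<and> P 5 \<and> P (6::nat)"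
proof -
  have "(\<forall>i<7. P i) \<longleftrightarrow> (\<forall>i\<in>{..<7}. P i)"
    by auto
  also have "\<dots> \<longleftrightarrow> P 0 \<and> P 1 \<and> P 2 \<and> P 3 \<and> P 4 \<and> P 5 \<and> P (6::nat)"
    by (auto simp: lessThan_nat_numeral lessThan_Suc)
  finally show ?thesis .
qed

lemma scalar_prod_7:
  "dim_vec y = 7 \<Longrightarrow> x \<bullet> y = x$0*y$0 + x$1*y$1 + x$2*y$2 + x$3*y$3 + x$4*y$4 + x$5*y$5 + x$6*y$6"
  by (simp add: scalar_prod_def atLeastLessThan_nat_numeral ac_simps)

lemma A_mult_u:
  assumes "1 \<le> j" "j \<le> 27"
  shows "A *\<^sub>v u j = kdiag {2} *\<^sub>v u (root_perm j) \<or> A *\<^sub>v u j = - (kdiag {2} *\<^sub>v u (root_perm j))"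
proof -
  have "\<forall>j\<in>set [1..<28]. A *\<^sub>v u j = kdiag {2} *\<^sub>v u (root_perm j) \<or>
      A *\<^sub>v u j = - (kdiag {2} *\<^sub>v u (root_perm j))"
    by (simp add: upt_rec vec_eq_iff all_less_7 dim_u root_perm_def A_def mat_of_rows_list_def
        kdiag_def scalar_prod_7 u_def e_def pairs_def cs_def)
  then show ?thesis
    using assms by auto
qed

lemma R2_mult_R2: "R 2 * R 2 = 1\<^sub>m 7"
  by (simp add: R_coordinate kdiag_mult kdiag_empty)

lemma A_mult_R:
  assumes j: "1 \<le> j" "j \<le> 27"
  shows "A * R j = R 2 * R (root_perm j) * R 2 * A"
proof -
  let ?v = "u (root_perm j)"
  have R2: "R 2 \<in> Gamma6"
    by (rule R_in_Gamma6) simp_all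
  have R2_eq: "R 2 = kdiag {2}"
    by (simp add: R_coordinate)
  have "refl_mat (A *\<^sub>v u j) = refl_mat (R 2 *\<^sub>v ?v)"
    using A_mult_u [OF j] by (auto simp: R2_eq dim_u refl_mat_uminus)
  also have "\<dots> = R 2 * R (root_perm j) * R 2"
    using mult_refl_mat [OF R2, of ?v] R2_mult_R2
    by (simp add: dim_u R_eq_refl_mat assoc_mult_mat7 right_mult_one_mat [of _ 7 7] flip: R_eq_refl_mat)
  finally show ?thesis
    using mult_refl_mat [OF A_in_Gamma6, of "u j"] by (simp add: dim_u R_eq_refl_mat)
qed

lemma A_mult_word_mat:
  "set w \<subseteq> {1..27} \<Longrightarrow> A * word_mat w = word_mat (2 # map root_perm w @ [2]) * A"
proof (induction w)
  case Nil
  then show ?case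
    by (simp add: R2_mult_R2 right_mult_one_mat [of _ 7 7] left_mult_one_mat [of _ 7 7])
next
  case (Cons s w)
  then have s: "1 \<le> s" "s \<le> 27" and IH: "A * word_mat w = word_mat (2 # map root_perm w @ [2]) * A"
    by auto
  have "A * word_mat (s # w) = (A * R s) * word_mat w"
    by (simp add: assoc_mult_mat7)
  also have "\<dots> = R 2 * (R (root_perm s) * (R 2 * (A * word_mat w)))"
    unfolding A_mult_R [OF s] by (simp add: assoc_mult_mat7 mult_carrier_mat7)
  also have "\<dots> = R 2 * (R (root_perm s) * (word_mat (map root_perm w @ [2]) * A))"
    unfolding IH using R2_mult_R2
    by (simp add: assoc_mult_mat7 mult_carrier_mat7 left_mult_one_mat [of _ 7 7] flip: assoc_mult_mat7)
  also have "\<dots> = word_mat (2 # map root_perm (s # w) @ [2]) * A"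
    by (simp add: assoc_mult_mat7 mult_carrier_mat7)
  finally show ?case .
qed

lemma word_colour_root_perm:
  assumes "7 \<le> j" "j \<le> 27"
  shows "word_colour (root_perm j # map root_perm (coord_word (colour j))) = {}"
proof -
  have "\<forall>j\<in>set [7..<28]. word_colour (root_perm j # map root_perm (coord_word (colour j))) = {}"
    by (simp add: upt_rec root_perm_def coord_word_def colour_def Ns_def word_colour_def insert_Diff_if)
  moreover have "j \<in> set [7..<28]"
    using assms by (simp only: set_upt atLeastLessThan_iff) simp
  ultimately show ?thesis
    by (rule bspec)
qed

lemma Hgens_eq_word_mat:
  assumes "x \<in> Hgens"
  obtains N j where "N \<subseteq> {1..6}" "7 \<le> j" "j \<le> 27"
    and "x = word_mat (coord_word N @ j # coord_word N @ coord_word (colour j))"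
proof -
  obtain N j where x: "x = kdiag N * R j * kdiag N * k j" "N \<subseteq> {1..6}" "7 \<le> j" "j \<le> 27"
    using assms by (auto simp: Hgens_def K6_def)
  then have "x = word_mat (coord_word N @ j # coord_word N @ coord_word (colour j))"
    using coord_word [OF x(2)] coord_word [OF colour_subset [of j]]
    by (simp add: word_mat_append k_eq_kdiag_colour assoc_mult_mat7 mult_carrier_mat7)
  with x that show ?thesis
    by blast
qed

lemma A_conj_Hgens: "x \<in> Hgens \<Longrightarrow> A * x * inv\<^bsub>G6\<^esub> A \<in> Hgrp"
proof -
  assume "x \<in> Hgens"
  then obtain N j where N: "N \<subseteq> {1..6}" and j: "7 \<le> j" "j \<le> 27"
    and x: "x = word_mat (coord_word N @ j # coord_word N @ coord_word (colour j))"
    by (rule Hgens_eq_word_mat)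
  define w where "w = coord_word N @ j # coord_word N @ coord_word (colour j)"
  have w: "set w \<subseteq> {1..27}"
    using coord_word (3) [OF N] coord_word (3) [OF colour_subset [of j]] j by (auto simp: w_def)
  then have w': "set (2 # map root_perm w @ [2]) \<subseteq> {1..27}"
    using root_perm_range by auto
  have inv_A: "inv\<^bsub>G6\<^esub> A \<in> carrier_mat 7 7" "A * inv\<^bsub>G6\<^esub> A = 1\<^sub>m 7"
    using group.inv_closed [OF group_G6, of A] group.r_inv [OF group_G6, of A] A_in_Gamma6
    by (auto intro: Gamma6_carrier)
  have "A * x * inv\<^bsub>G6\<^esub> A = (word_mat (2 # map root_perm w @ [2]) * A) * inv\<^bsub>G6\<^esub> A"
    unfolding x w_def [symmetric] A_mult_word_mat [OF w] ..
  also have "\<dots> = word_mat (2 # map root_perm w @ [2])"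
    using inv_A by (simp add: assoc_mult_mat7 right_mult_one_mat [of _ 7 7] del: word_mat_simps)
  finally have "A * x * inv\<^bsub>G6\<^esub> A = word_mat (2 # map root_perm w @ [2])" .
  moreover have "word_colour (2 # map root_perm w @ [2]) = word_colour (root_perm j # map root_perm (coord_word (colour j)))"
    by (auto simp: w_def word_colour_append)
  ultimately show ?thesis
    using word_mat_in_Hgrp [OF w'] word_colour_root_perm [OF j] by simp
qed


lemma A_conj_Hgrp: "h \<in> Hgrp \<Longrightarrow> A \<otimes>\<^bsub>G6\<^esub> h \<otimes>\<^bsub>G6\<^esub> inv\<^bsub>G6\<^esub> A \<in> Hgrp"
  using group.conj_generate_closed [OF group_G6, of A Hgens h] A_in_Gamma6 Hgens_subset_Gamma6 A_conj_Hgens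
  unfolding Hgrp_eq_generate by simp

section \<open>Reduction mod 2 and the powers of \<open>A\<close>\<close>

definition cong_one_mod2 :: "nat \<Rightarrow> int mat \<Rightarrow> bool" where
  "cong_one_mod2 n M \<longleftrightarrow> M \<in> carrier_mat n n \<and> (\<forall>i<n. \<forall>c<n. even (M $$ (i,c) - 1\<^sub>m n $$ (i,c)))"

lemma cong_one_mod2_mult:
  assumes M: "cong_one_mod2 n M" and N: "cong_one_mod2 n N"
  shows "cong_one_mod2 n (M * N)"
proof -
  have Mc: "M \<in> carrier_mat n n" and Nc: "N \<in> carrier_mat n n"
    using M N by (auto simp: cong_one_mod2_def)
  let ?d = "\<lambda>a b. if a = b then 1 else (0::int)"
  have eM: "\<And>i c. i < n \<Longrightarrow> c < n \<Longrightarrow> even (M $$ (i,c) - ?d i c)"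
    and eN: "\<And>i c. i < n \<Longrightarrow> c < n \<Longrightarrow> even (N $$ (i,c) - ?d i c)"
    using M N by (auto simp: cong_one_mod2_def)
  have "even ((M * N) $$ (i,c) - ?d i c)" if i: "i < n" and c: "c < n" for i c
  proof -
    have "(\<Sum>m\<in>{0..<n}. ?d i m * ?d m c) = (\<Sum>m\<in>{0..<n}. if m = i then ?d i c else 0)"
      by (rule sum.cong) auto
    then have dd: "(\<Sum>m\<in>{0..<n}. ?d i m * ?d m c) = ?d i c"
      using i by simp
    have "(M * N) $$ (i,c) - ?d i c = (\<Sum>m\<in>{0..<n}. M $$ (i,m) * N $$ (m,c)) - (\<Sum>m\<in>{0..<n}. ?d i m * ?d m c)"
      using Mc Nc i c dd by (simp add: scalar_prod_def)
    also have "\<dots> = (\<Sum>m\<in>{0..<n}. (M $$ (i,m) - ?d i m) * N $$ (m,c) + ?d i m * (N $$ (m,c) - ?d m c))"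
      by (simp add: sum_subtractf [symmetric] algebra_simps)
    also have "even \<dots>"
      using eM [OF i] eN [OF _ c] by (intro dvd_sum) auto
    finally show ?thesis .
  qed
  then show ?thesis
    using Mc Nc by (auto simp: cong_one_mod2_def)
qed

lemma cong_one_mod2_J_transpose:
  assumes "cong_one_mod2 7 M"
  shows "cong_one_mod2 7 (J * transpose_mat M * J)"
proof -
  have M: "M \<in> carrier_mat 7 7"
    using assms by (simp add: cong_one_mod2_def)
  have "(J * transpose_mat M * J) $$ (i,c) = (if i < 6 then 1 else -1) * M $$ (c,i) * (if c < 6 then 1 else -1)"
    if "i < 7" "c < 7" for i c
    using M that by (simp add: J_def scalar_prod_def sum.delta' atLeast0LessThan
        if_distrib [of "\<lambda>x. x * _"] if_distrib [of "\<lambda>x. _ * x"] cong: if_cong)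
  then show ?thesis
    using assms M by (auto simp: cong_one_mod2_def intro!: mult_carrier_mat)
qed

lemma cong_one_mod2_refl_mat: "dim_vec v = 7 \<Longrightarrow> cong_one_mod2 7 (refl_mat v)"
  by (auto simp: cong_one_mod2_def refl_mat_entry)

lemma cong_one_mod2_kdiag: "cong_one_mod2 7 (kdiag N)"
  by (auto simp: cong_one_mod2_def kdiag_def)

lemma subgroup_cong_one_mod2: "subgroup {M \<in> Gamma6. cong_one_mod2 7 M} G6"
proof (rule group.subgroupI [OF group_G6])
  show "{M \<in> Gamma6. cong_one_mod2 7 M} \<subseteq> carrier G6"
    by auto
  have "cong_one_mod2 7 (1\<^sub>m 7)"
    by (simp add: cong_one_mod2_def)
  then show "{M \<in> Gamma6. cong_one_mod2 7 M} \<noteq> {}"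
    using one_in_Gamma6 by blast
  fix M N assume "M \<in> {M \<in> Gamma6. cong_one_mod2 7 M}" "N \<in> {M \<in> Gamma6. cong_one_mod2 7 M}"
  then show "inv\<^bsub>G6\<^esub> M \<in> {M \<in> Gamma6. cong_one_mod2 7 M}"
    and "M \<otimes>\<^bsub>G6\<^esub> N \<in> {M \<in> Gamma6. cong_one_mod2 7 M}"
    by (auto simp: inv_G6 Gamma6_inverse Gamma6_mult cong_one_mod2_J_transpose cong_one_mod2_mult)
qed

lemma Hgrp_cong_one_mod2: "h \<in> Hgrp \<Longrightarrow> cong_one_mod2 7 h"
proof -
  have "Hgens \<subseteq> {M \<in> Gamma6. cong_one_mod2 7 M}"
    using Hgens_subset_Gamma6
    by (auto simp: Hgens_def K6_def R_eq_refl_mat k_def dim_u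
        intro!: cong_one_mod2_mult cong_one_mod2_refl_mat cong_one_mod2_kdiag)
  then have "Hgrp \<subseteq> {M \<in> Gamma6. cong_one_mod2 7 M}"
    unfolding Hgrp_eq_generate by (rule group.generate_subgroup_incl [OF group_G6 _ subgroup_cong_one_mod2])
  then show "h \<in> Hgrp \<Longrightarrow> cong_one_mod2 7 h"
    by auto
qed

lemma G6_pow_eq_foldr:
  assumes "M \<in> Gamma6"
  shows "M [^]\<^bsub>G6\<^esub> (n::nat) = foldr (*) (replicate n M) (1\<^sub>m 7)"
proof (induction n)
  case (Suc n)
  have "M [^]\<^bsub>G6\<^esub> Suc n = M \<otimes>\<^bsub>G6\<^esub> M [^]\<^bsub>G6\<^esub> n"
    using assms by (intro monoid.nat_pow_Suc2 group.is_monoid group_G6) simp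
  with Suc.IH show ?case
    by (simp del: foldr_replicate)
qed simp

lemma A_pow_4_not_in_Hgrp: "A [^]\<^bsub>G6\<^esub> (4::nat) \<notin> Hgrp"
proof
  have "A [^]\<^bsub>G6\<^esub> (4::nat)
      = mat_of_rows_list 7 (foldr rows_mult (map mat_to_list (replicate 4 A)) (mat_to_list (1\<^sub>m 7)))"
    unfolding G6_pow_eq_foldr [OF A_in_Gamma6] by (rule foldr_mult_eq_rows_mult) simp_all
  then have "(A [^]\<^bsub>G6\<^esub> (4::nat)) $$ (1,2) = 5"
    by (simp add: numeral_eq_Suc A_def mat_to_list_def mat_of_rows_list_def rows_mult_def upt_rec)
  moreover assume "A [^]\<^bsub>G6\<^esub> (4::nat) \<in> Hgrp"
  then have "even ((A [^]\<^bsub>G6\<^esub> (4::nat)) $$ (1,2))"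
    using Hgrp_cong_one_mod2 by (fastforce simp: cong_one_mod2_def)
  ultimately show False
    by simp
qed

lemma A_pow_8_in_Hgrp: "A [^]\<^bsub>G6\<^esub> (8::nat) \<in> Hgrp"
proof -
  let ?w = "[2,11,4,20,9,21,12,14]"
  have "A [^]\<^bsub>G6\<^esub> (8::nat)
      = mat_of_rows_list 7 (foldr rows_mult (map mat_to_list (replicate 8 A)) (mat_to_list (1\<^sub>m 7)))"
    unfolding G6_pow_eq_foldr [OF A_in_Gamma6] by (rule foldr_mult_eq_rows_mult) simp_all
  also have "\<dots> = mat_of_rows_list 7 (foldr rows_mult (map mat_to_list (map R ?w)) (mat_to_list (1\<^sub>m 7)))"
    by (simp add: numeral_eq_Suc A_def mat_to_list_def mat_of_rows_list_def rows_mult_def upt_rec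
        R_eq_refl_mat refl_mat_def refl_vec_def lf_explicit u_def e_def pairs_def cs_def)
  also have "\<dots> = word_mat ?w"
    unfolding word_mat_def by (rule foldr_mult_eq_rows_mult [symmetric]) simp_all
  finally show ?thesis
    by (simp only:) (rule word_mat_in_Hgrp, simp_all add: colour_def Ns_def insert_Diff_if)
qed

lemma dvd_8_not_dvd_4: "(d::nat) dvd 8 \<Longrightarrow> \<not> d dvd 4 \<Longrightarrow> d = 8"
proof -
  assume "d dvd 8" "\<not> d dvd 4"
  moreover have "d \<le> 8"
    using \<open>d dvd 8\<close> by (rule dvd_imp_le) simp
  moreover have "d \<in> {0,1,2,3,4,5,6,7,8}"
    using \<open>d \<le> 8\<close> by auto
  ultimately show "d = 8"
    by (auto simp: dvd_eq_mod_eq_0)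
qed

theorem lemma8p5:
  shows "Hgrp \<lhd> GammaA \<and>
         order (GammaA Mod Hgrp) = 8 \<and>
         carrier (GammaA Mod Hgrp) = generate (GammaA Mod Hgrp) {Hgrp #>\<^bsub>GammaA\<^esub> A}"
proof -
  have A: "A \<in> carrier G6"
    using A_in_Gamma6 by simp
  note quotient = group.quotient_generate_insert [OF group_G6 subgroup_Hgrp A A_conj_Hgrp A_pow_8_in_Hgrp,
      folded GammaA_def, simplified]
  have "group.ord (GammaA Mod Hgrp) (Hgrp #>\<^bsub>GammaA\<^esub> A) = 8"
    using quotient (4) [of 8] quotient (4) [of 4] A_pow_8_in_Hgrp A_pow_4_not_in_Hgrp
    by (intro dvd_8_not_dvd_4) simp_all
  with quotient (1-3) show ?thesis
    by simp
qed

end
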